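(* Let $\mathcal I$ be the set of all infinitely divisible real random variables $X$ with $E[X^2]<\infty$, and let $\mathcal I_0=\{X\in\mathcal I: \mathrm{Var}(X)>0\}$. Define $$P_{\mathcal I}=\inf_{X\in\mathcal I}P\left\{|X-E[X]|\le \sqrt{\mathrm{Var}(X)}\right\},\qquad P_{\mathcal I_0}=\inf_{X\in\mathcal I_0}P\left\{|X-E[X]|<\sqrt{\mathrm{Var}(X)}\right\}.$$ Then $P_{\mathcal I}\ge P_{\mathcal I_0}>0$. Moreover, there exists $Y\in\mathcal I_0$ such that $P_{\mathcal I_0}=P\{|Y-E[Y]|<\sqrt{\mathrm{Var}(Y)}\}$.
   Context: A real random variable (or its distribution) is infinitely divisible if for every $n\ge1$ its distribution equals that of a sum of $n$ i.i.d. random variables. *)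

theory Defs
  imports "HOL-Probability.Probability"
begin

text \<open>A real random variable is identified with its distribution; all quantities in the
  statement (mean, variance, probabilities of events about X) depend only on it.\<close>

definition real_distribution :: "real measure \<Rightarrow> bool" where
  "real_distribution \<mu> \<longleftrightarrow> prob_space \<mu> \<and> sets \<mu> = sets borel"

definition iid_sum_distr :: "nat \<Rightarrow> real measure \<Rightarrow> real measure" where
  "iid_sum_distr n \<nu> = distr (PiM {..<n} (\<lambda>_. \<nu>)) borel (\<lambda>x. \<Sum>i<n. x i)"

definition infinitely_divisible :: "real measure \<Rightarrow> bool" where
  "infinitely_divisible \<mu> \<longleftrightarrow>
     (\<forall>n::nat. n \<ge> 1 \<longrightarrow> (\<exists>\<nu>. real_distribution \<nu> \<and> \<mu> = iid_sum_distr n \<nu>))"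

definition mean :: "real measure \<Rightarrow> real" where
  "mean \<mu> = (\<integral>x. x \<partial>\<mu>)"

definition var :: "real measure \<Rightarrow> real" where
  "var \<mu> = (\<integral>x. (x - mean \<mu>)\<^sup>2 \<partial>\<mu>)"

definition ID_class :: "real measure set" where
  "ID_class = {\<mu>. real_distribution \<mu> \<and> infinitely_divisible \<mu> \<and> integrable \<mu> (\<lambda>x. x\<^sup>2)}"

definition ID0_class :: "real measure set" where
  "ID0_class = {\<mu> \<in> ID_class. var \<mu> > 0}"

definition P_I :: real where
  "P_I = (INF \<mu>\<in>ID_class. measure \<mu> {x. \<bar>x - mean \<mu>\<bar> \<le> sqrt (var \<mu>)})"

definition P_I0 :: real where
  "P_I0 = (INF \<mu>\<in>ID0_class. measure \<mu> {x. \<bar>x - mean \<mu>\<bar> < sqrt (var \<mu>)})"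

end

theory Submission
  imports Defs
begin

(*
  Standardising X to mean 0 and variance 1 turns the event |X - E X| < sd X into |X| < 1, so P_I0 is
  an infimum of P(|X| < 1) over standardised infinitely divisible laws. A minimising sequence has
  second moments 1 and is therefore tight, so a subsequence converges weakly to some Y. The limit is
  again infinitely divisible (the k-th convolution roots along the sequence are tight as well, and
  characteristic functions pass to the limit), E Y = 0, E Y^2 <= 1, and by the portmanteau inequality
  for the open set {|x| < 1}, P(|Y| < 1) <= P_I0. Since P(|Y - E Y| < sd Y) < 1 for every
  nondegenerate law, P_I0 < 1, so Y is nondegenerate, and Var Y <= 1 shows that Y attains P_I0.
  The infimum is positive because P(|X - E X| < sd X) = 0 forces X to be the symmetric two-point law
  on E X +- sd X, which is not even the sum of two i.i.d. variables. Finally P_I >= P_I0, because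
  closed intervals contain open ones and degenerate laws give probability 1.
*)

section \<open>Real distributions\<close>

lemma real_distribution_iff_locale:
  "real_distribution \<mu> \<longleftrightarrow> Distribution_Functions.real_distribution \<mu>"
  by (simp add: Defs.real_distribution_def Distribution_Functions.real_distribution_def
      real_distribution_axioms_def)

lemma real_distribution_distrI:
  assumes "real_distribution \<mu>" "f \<in> borel_measurable borel"
  shows "real_distribution (distr \<mu> borel f)"
proof -
  interpret real_distribution \<mu> using assms(1) by (simp add: real_distribution_iff_locale)
  show ?thesis using assms(2) by (simp add: real_distribution_iff_locale)
qed

lemma measure_eq_1_if_AE:
  assumes "real_distribution \<mu>" "A \<in> sets borel" "AE x in \<mu>. x \<in> A"
  shows "measure \<mu> A = 1"
proof -
  interpret real_distribution \<mu> using assms(1) by (simp add: real_distribution_iff_locale)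
  show ?thesis using assms(2,3) by (simp add: AE_in_set_eq_1)
qed

lemma measure_greaterThan_eq_1_minus_cdf:
  assumes "real_distribution \<mu>"
  shows "measure \<mu> {b<..} = 1 - cdf \<mu> b"
proof -
  interpret real_distribution \<mu> using assms by (simp add: real_distribution_iff_locale)
  have "{b<..} = space \<mu> - {..b}" by auto
  then show ?thesis using prob_compl[of "{..b}"] by (simp add: cdf_def)
qed

lemma integrable_id_if_square_integrable:
  assumes "real_distribution \<nu>" "integrable \<nu> (\<lambda>x. x\<^sup>2)"
  shows "integrable \<nu> (\<lambda>x. x)"
proof -
  interpret real_distribution \<nu> using assms(1) by (simp add: real_distribution_iff_locale)
  show ?thesis using assms(2) by (rule square_integrable_imp_integrable[rotated]) simp
qed

lemma integrable_square_shift: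
  assumes "real_distribution \<mu>" "integrable \<mu> (\<lambda>x. x\<^sup>2)"
  shows "integrable \<mu> (\<lambda>x. (x - a)\<^sup>2)"
proof -
  interpret real_distribution \<mu> using assms(1) by (simp add: real_distribution_iff_locale)
  have "integrable \<mu> (\<lambda>x. x\<^sup>2 - 2 * a * x + a\<^sup>2)"
    using assms integrable_id_if_square_integrable by simp
  moreover have "(\<lambda>x. (x - a)\<^sup>2) = (\<lambda>x. x\<^sup>2 - 2 * a * x + a\<^sup>2)"
    by (simp add: fun_eq_iff power2_diff algebra_simps)
  ultimately show ?thesis by simp
qed

lemma var_nonneg: "var \<mu> \<ge> 0"
  unfolding var_def by (rule integral_nonneg_AE) simp

lemma measure_eq_1_if_var_eq_0:
  assumes \<mu>: "real_distribution \<mu>" "integrable \<mu> (\<lambda>x. x\<^sup>2)" and "var \<mu> = 0"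
    and A: "A \<in> sets borel" "mean \<mu> \<in> A"
  shows "measure \<mu> A = 1"
proof -
  have "AE x in \<mu>. x = mean \<mu>"
    using integral_nonneg_eq_0_iff_AE[OF integrable_square_shift[OF \<mu>], of "mean \<mu>"] \<open>var \<mu> = 0\<close>
    by (simp add: var_def)
  then have "AE x in \<mu>. x \<in> A"
    by eventually_elim (use A in simp)
  then show ?thesis by (rule measure_eq_1_if_AE[OF \<mu>(1) A(1)])
qed


section \<open>Sums of i.i.d. variables\<close>

lemma borel_measurable_sum_PiM:
  assumes "real_distribution \<nu>"
  shows "(\<lambda>x. \<Sum>i<k. x i) \<in> borel_measurable (PiM {..<k} (\<lambda>_. \<nu>))"
proof -
  have "sets (PiM {..<k} (\<lambda>_. \<nu>)) = sets (PiM {..<k} (\<lambda>_. borel))"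
    using assms by (intro sets_PiM_cong) (simp_all add: Defs.real_distribution_def)
  then show ?thesis by (subst measurable_cong_sets[OF _ refl]) measurable
qed

lemma real_distribution_iid_sum_distr:
  assumes "real_distribution \<nu>"
  shows "real_distribution (iid_sum_distr k \<nu>)"
proof -
  interpret prob_space \<nu> using assms by (simp add: Defs.real_distribution_def)
  have "prob_space (PiM {..<k} (\<lambda>_. \<nu>))" by (intro prob_space_PiM) (rule prob_space_axioms)
  then show ?thesis
    unfolding iid_sum_distr_def Defs.real_distribution_def
    by (simp add: prob_space.prob_space_distr borel_measurable_sum_PiM[OF assms])
qed

lemma char_iid_sum_distr:
  assumes "real_distribution \<nu>"
  shows "char (iid_sum_distr k \<nu>) t = char \<nu> t ^ k"
proof -
  interpret real_distribution \<nu> using assms by (simp add: real_distribution_iff_locale)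
  interpret product_sigma_finite "\<lambda>_. \<nu>"
    by (simp add: product_sigma_finite_def sigma_finite_measure_axioms)
  have "char (iid_sum_distr k \<nu>) t = (\<integral>x. iexp (t * (\<Sum>i<k. x i)) \<partial>PiM {..<k} (\<lambda>_. \<nu>))"
    unfolding char_def iid_sum_distr_def
    by (simp add: integral_distr borel_measurable_sum_PiM[OF assms])
  also have "\<dots> = (\<integral>x. (\<Prod>i<k. iexp (t * x i)) \<partial>PiM {..<k} (\<lambda>_. \<nu>))"
    by (simp add: sum_distrib_left exp_sum)
  also have "\<dots> = (\<Prod>i<k. char \<nu> t)"
    unfolding char_def by (rule product_integral_prod) (auto intro: integrable_iexp)
  finally show ?thesis by simp
qed

lemma measure_PiM_PiE_power:
  assumes "real_distribution \<nu>" "A \<in> sets borel"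
  shows "measure (PiM {..<k} (\<lambda>_. \<nu>)) (PiE {..<k} (\<lambda>_. A)) = measure \<nu> A ^ k"
proof -
  interpret real_distribution \<nu> using assms(1) by (simp add: real_distribution_iff_locale)
  interpret product_sigma_finite "\<lambda>_. \<nu>"
    by (simp add: product_sigma_finite_def sigma_finite_measure_axioms)
  have "emeasure (PiM {..<k} (\<lambda>_. \<nu>)) (PiE {..<k} (\<lambda>_. A)) = ennreal (measure \<nu> A ^ k)"
    using assms(2) by (simp add: emeasure_PiM emeasure_eq_measure prod_ennreal ennreal_power)
  then show ?thesis by (simp add: measure_def)
qed

lemma measure_iid_sum_distr:
  assumes "real_distribution \<nu>" "B \<in> sets borel"
  shows "measure (iid_sum_distr k \<nu>) B =
    measure (PiM {..<k} (\<lambda>_. \<nu>)) ((\<lambda>x. \<Sum>i<k. x i) -` B \<inter> space (PiM {..<k} (\<lambda>_. \<nu>)))"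
  unfolding iid_sum_distr_def
  using assms by (intro measure_distr borel_measurable_sum_PiM) simp_all

lemma power_le_measure_iid_sum_distr:
  assumes \<nu>: "real_distribution \<nu>" and A: "A \<in> sets borel" and B: "B \<in> sets borel"
    and sum_in: "\<And>x. (\<And>i. i < k \<Longrightarrow> x i \<in> A) \<Longrightarrow> (\<Sum>i<k. x i) \<in> B"
  shows "measure \<nu> A ^ k \<le> measure (iid_sum_distr k \<nu>) B"
proof -
  interpret real_distribution \<nu> using \<nu> by (simp add: real_distribution_iff_locale)
  interpret P: prob_space "PiM {..<k} (\<lambda>_. \<nu>)" by (intro prob_space_PiM) (rule prob_space_axioms)
  have "measure \<nu> A ^ k = measure (PiM {..<k} (\<lambda>_. \<nu>)) (PiE {..<k} (\<lambda>_. A))"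
    using measure_PiM_PiE_power[OF \<nu> A] by simp
  also have "\<dots> \<le> measure (iid_sum_distr k \<nu>) B"
    unfolding measure_iid_sum_distr[OF \<nu> B]
    using borel_measurable_sum_PiM[OF \<nu>] B sum_in
    by (intro P.finite_measure_mono measurable_sets) (auto simp: space_PiM PiE_iff)
  finally show ?thesis .
qed

lemma measure_iid_sum_distr_le_power:
  assumes \<nu>: "real_distribution \<nu>" and A: "AE y in \<nu>. y \<in> A"
    and B: "B \<in> sets borel" and C: "C \<in> sets borel"
    and in_C: "\<And>x i. (\<And>i. i < k \<Longrightarrow> x i \<in> A) \<Longrightarrow> (\<Sum>i<k. x i) \<in> B \<Longrightarrow> i < k \<Longrightarrow>
      x i \<in> C"
  shows "measure (iid_sum_distr k \<nu>) B \<le> measure \<nu> C ^ k"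
proof -
  interpret real_distribution \<nu> using \<nu> by (simp add: real_distribution_iff_locale)
  interpret P: prob_space "PiM {..<k} (\<lambda>_. \<nu>)" by (intro prob_space_PiM) (rule prob_space_axioms)
  have "AE x in PiM {..<k} (\<lambda>_. \<nu>). \<forall>i\<in>{..<k}. x i \<in> A"
    using A by (intro AE_finite_allI AE_PiM_component) (simp_all add: prob_space_axioms)
  then have "AE x in PiM {..<k} (\<lambda>_. \<nu>).
      x \<in> (\<lambda>x. \<Sum>i<k. x i) -` B \<inter> space (PiM {..<k} (\<lambda>_. \<nu>)) \<longrightarrow> x \<in> PiE {..<k} (\<lambda>_. C)"
    by eventually_elim (auto simp: space_PiM PiE_iff in_C)
  then have "measure (iid_sum_distr k \<nu>) B \<le> measure (PiM {..<k} (\<lambda>_. \<nu>)) (PiE {..<k} (\<lambda>_. C))"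
    unfolding measure_iid_sum_distr[OF \<nu> B] using C
    by (intro P.finite_measure_mono_AE sets_PiM_I_finite) simp_all
  also have "\<dots> = measure \<nu> C ^ k"
    by (rule measure_PiM_PiE_power[OF \<nu> C])
  finally show ?thesis .
qed

lemma power_measure_greaterThan_le_iid_sum_distr:
  assumes \<nu>: "real_distribution \<nu>" and k: "k \<ge> 1"
  shows "measure \<nu> {c<..} ^ k \<le> measure (iid_sum_distr k \<nu>) {k * c<..}"
proof (rule power_le_measure_iid_sum_distr[OF \<nu>])
  fix x :: "nat \<Rightarrow> real" assume "\<And>i. i < k \<Longrightarrow> x i \<in> {c<..}"
  then have "(\<Sum>i<k. c) < (\<Sum>i<k. x i)" using k by (intro sum_strict_mono) (auto simp: lessThan_empty_iff)
  then show "(\<Sum>i<k. x i) \<in> {k * c<..}" by simp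
qed simp_all

lemma power_measure_lessThan_le_iid_sum_distr:
  assumes \<nu>: "real_distribution \<nu>" and k: "k \<ge> 1"
  shows "measure \<nu> {..<c} ^ k \<le> measure (iid_sum_distr k \<nu>) {..<k * c}"
proof (rule power_le_measure_iid_sum_distr[OF \<nu>])
  fix x :: "nat \<Rightarrow> real" assume "\<And>i. i < k \<Longrightarrow> x i \<in> {..<c}"
  then have "(\<Sum>i<k. x i) < (\<Sum>i<k. c)" using k by (intro sum_strict_mono) (auto simp: lessThan_empty_iff)
  then show "(\<Sum>i<k. x i) \<in> {..<k * c}" by simp
qed simp_all

lemma power_cdf_le_cdf_iid_sum_distr:
  assumes \<nu>: "real_distribution \<nu>"
  shows "cdf \<nu> c ^ k \<le> cdf (iid_sum_distr k \<nu>) (k * c)"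
  unfolding cdf_def
proof (rule power_le_measure_iid_sum_distr[OF \<nu>])
  fix x :: "nat \<Rightarrow> real" assume "\<And>i. i < k \<Longrightarrow> x i \<in> {..c}"
  then have "(\<Sum>i<k. x i) \<le> (\<Sum>i<k. c)" by (intro sum_mono) auto
  then show "(\<Sum>i<k. x i) \<in> {..k * c}" by simp
qed simp_all

lemma AE_le_if_AE_iid_sum_distr_le:
  assumes \<nu>: "real_distribution \<nu>" and k: "k \<ge> 1"
    and AE_sum: "AE x in iid_sum_distr k \<nu>. x \<le> k * c"
  shows "AE y in \<nu>. y \<le> c"
proof -
  interpret \<nu>: real_distribution \<nu> using \<nu> by (simp add: real_distribution_iff_locale)
  have \<mu>: "real_distribution (iid_sum_distr k \<nu>)" by (rule real_distribution_iid_sum_distr[OF \<nu>])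
  have "measure \<nu> {c<..} ^ k \<le> measure (iid_sum_distr k \<nu>) {k * c<..}"
    by (rule power_measure_greaterThan_le_iid_sum_distr[OF \<nu> k])
  also have "\<dots> = 0"
    using measure_eq_1_if_AE[OF \<mu>, of "{..k * c}"] AE_sum \<mu>
    by (simp add: measure_greaterThan_eq_1_minus_cdf cdf_def)
  finally have "measure \<nu> {c<..} ^ k = 0"
    by (rule antisym[OF _ zero_le_power[OF measure_nonneg]])
  then have "measure \<nu> {..c} = 1"
    using k \<nu> by (simp add: measure_greaterThan_eq_1_minus_cdf cdf_def)
  then have "AE y in \<nu>. y \<in> {..c}" by (rule \<nu>.AE_prob_1)
  then show ?thesis by simp
qed

lemma AE_ge_if_AE_iid_sum_distr_ge:
  assumes \<nu>: "real_distribution \<nu>" and k: "k \<ge> 1"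
    and AE_sum: "AE x in iid_sum_distr k \<nu>. k * c \<le> x"
  shows "AE y in \<nu>. c \<le> y"
proof -
  interpret \<nu>: real_distribution \<nu> using \<nu> by (simp add: real_distribution_iff_locale)
  interpret \<mu>: real_distribution "iid_sum_distr k \<nu>"
    using real_distribution_iid_sum_distr[OF \<nu>] by (simp add: real_distribution_iff_locale)
  have "measure \<nu> {..<c} ^ k \<le> measure (iid_sum_distr k \<nu>) {..<k * c}"
    by (rule power_measure_lessThan_le_iid_sum_distr[OF \<nu> k])
  also have "\<dots> = 0"
  proof -
    have "measure (iid_sum_distr k \<nu>) {k * c..} = 1"
      using \<mu>.AE_in_set_eq_1[of "{k * c..}"] AE_sum by simp
    moreover have "{..<k * c} = space (iid_sum_distr k \<nu>) - {k * c..}" by auto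
    ultimately show ?thesis using \<mu>.prob_compl[of "{k * c..}"] by simp
  qed
  finally have "measure \<nu> {..<c} ^ k = 0"
    by (rule antisym[OF _ zero_le_power[OF measure_nonneg]])
  then have "measure \<nu> {..<c} = 0" using k by simp
  moreover have "{c..} = space \<nu> - {..<c}" by auto
  ultimately have "measure \<nu> {c..} = 1"
    using \<nu>.prob_compl[of "{..<c}"] by simp
  then have "AE y in \<nu>. y \<in> {c..}" by (rule \<nu>.AE_prob_1)
  then show ?thesis by simp
qed

lemma measure_iid_sum_distr_top_atom:
  assumes \<nu>: "real_distribution \<nu>" and AE_le: "AE y in \<nu>. y \<le> c"
  shows "measure (iid_sum_distr k \<nu>) {k * c} \<le> measure \<nu> {c} ^ k"
proof (rule measure_iid_sum_distr_le_power[OF \<nu>])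
  show "AE y in \<nu>. y \<in> {..c}" using AE_le by simp
  fix x :: "nat \<Rightarrow> real" and i :: nat
  assume le: "\<And>i. i < k \<Longrightarrow> x i \<in> {..c}" and sum: "(\<Sum>i<k. x i) \<in> {k * c}" and "i < k"
  show "x i \<in> {c}"
  proof (rule ccontr)
    assume "x i \<notin> {c}"
    then have "(\<Sum>j<k. x j) < (\<Sum>j<k. c)"
      using le \<open>i < k\<close> by (intro sum_strict_mono_ex1) (auto simp: le_less)
    then show False using sum by simp
  qed
qed simp_all

lemma measure_iid_sum_distr_bottom_atom:
  assumes \<nu>: "real_distribution \<nu>" and AE_ge: "AE y in \<nu>. c \<le> y"
  shows "measure (iid_sum_distr k \<nu>) {k * c} \<le> measure \<nu> {c} ^ k"
proof (rule measure_iid_sum_distr_le_power[OF \<nu>])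
  show "AE y in \<nu>. y \<in> {c..}" using AE_ge by simp
  fix x :: "nat \<Rightarrow> real" and i :: nat
  assume ge: "\<And>i. i < k \<Longrightarrow> x i \<in> {c..}" and sum: "(\<Sum>i<k. x i) \<in> {k * c}" and "i < k"
  show "x i \<in> {c}"
  proof (rule ccontr)
    assume "x i \<notin> {c}"
    then have "(\<Sum>j<k. c) < (\<Sum>j<k. x j)"
      using ge \<open>i < k\<close> by (intro sum_strict_mono_ex1) (auto simp: le_less)
    then show False using sum by simp
  qed
qed simp_all


section \<open>Infinitely divisible laws\<close>

lemma char_distr_affine:
  assumes "real_distribution \<mu>"
  shows "char (distr \<mu> borel (\<lambda>x. a * x + b)) t = iexp (t * b) * char \<mu> (a * t)"
proof -
  interpret real_distribution \<mu> using assms by (simp add: real_distribution_iff_locale)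
  have "iexp (t * (a * x + b)) = iexp (t * b) * iexp (a * t * x)" for x
    by (simp add: algebra_simps flip: exp_add)
  then show ?thesis by (simp add: char_def integral_distr)
qed

lemma infinitely_divisible_distr_affine:
  assumes "real_distribution \<mu>" "infinitely_divisible \<mu>"
  shows "infinitely_divisible (distr \<mu> borel (\<lambda>x. a * x + b))"
  unfolding infinitely_divisible_def
proof (intro allI impI)
  fix n :: nat assume n: "n \<ge> 1"
  then obtain \<nu> where \<nu>: "real_distribution \<nu>" "\<mu> = iid_sum_distr n \<nu>"
    using assms(2) unfolding infinitely_divisible_def by blast
  define \<nu>' where "\<nu>' = distr \<nu> borel (\<lambda>x. a * x + b / n)"
  have \<nu>': "real_distribution \<nu>'" unfolding \<nu>'_def using \<nu>(1) by (simp add: real_distribution_distrI)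
  have "char (distr \<mu> borel (\<lambda>x. a * x + b)) t = char (iid_sum_distr n \<nu>') t" for t
  proof -
    have "iexp (t * (b / n)) ^ n = iexp (t * b)"
      using n by (simp flip: exp_of_nat_mult)
    then show ?thesis
      by (simp add: \<nu>'_def \<nu> char_distr_affine char_iid_sum_distr real_distribution_iid_sum_distr
          real_distribution_distrI power_mult_distrib)
  qed
  then have "distr \<mu> borel (\<lambda>x. a * x + b) = iid_sum_distr n \<nu>'"
    by (intro Levy_uniqueness ext)
      (use assms(1) \<nu>' in \<open>simp_all add: real_distribution_distrI real_distribution_iid_sum_distr
        flip: real_distribution_iff_locale\<close>)
  then show "\<exists>\<nu>. real_distribution \<nu> \<and> distr \<mu> borel (\<lambda>x. a * x + b) = iid_sum_distr n \<nu>"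
    using \<nu>' by blast
qed

lemma real_distribution_std_normal: "real_distribution std_normal_distribution"
  by (simp add: real_distribution_iff_locale real_dist_normal_dist)

lemma infinitely_divisible_std_normal: "infinitely_divisible std_normal_distribution"
  unfolding infinitely_divisible_def
proof (intro allI impI)
  fix n :: nat assume n: "n \<ge> 1"
  note N = real_distribution_std_normal
  define \<nu> where "\<nu> = distr std_normal_distribution borel (\<lambda>x. (1 / sqrt n) * x + 0)"
  have \<nu>: "real_distribution \<nu>" unfolding \<nu>_def using N by (simp add: real_distribution_distrI)
  have "char std_normal_distribution t = char (iid_sum_distr n \<nu>) t" for t
  proof -
    have "char \<nu> t = char std_normal_distribution (1 / sqrt n * t)"
      unfolding \<nu>_def char_distr_affine[OF N] by simp
    moreover have "exp (- ((1 / sqrt n * t)\<^sup>2) / 2) ^ n = exp (- t\<^sup>2 / 2)"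
      using n by (simp add: power_divide flip: exp_of_nat_mult)
    ultimately show ?thesis
      by (simp add: char_iid_sum_distr[OF \<nu>] char_std_normal_distribution flip: of_real_power)
  qed
  then have "std_normal_distribution = iid_sum_distr n \<nu>"
    by (intro Levy_uniqueness ext)
      (use N \<nu> in \<open>simp_all add: real_distribution_iid_sum_distr
        flip: real_distribution_iff_locale\<close>)
  then show "\<exists>\<nu>. real_distribution \<nu> \<and> std_normal_distribution = iid_sum_distr n \<nu>"
    using \<nu> by blast
qed

lemma sum_gt_1_if_squares_ge_half:
  fixes a b :: real
  assumes "a \<ge> 0" "b \<ge> 0" "1/2 \<le> a\<^sup>2" "1/2 \<le> b\<^sup>2"
  shows "a + b > 1"
proof -
  have "a > 0" "b > 0" using assms by (auto simp: le_less)
  then have "0 < 2 * a * b" by simp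
  then have "1 < a\<^sup>2 + b\<^sup>2 + 2 * a * b" using assms by linarith
  also have "\<dots> = (a + b)\<^sup>2" by (simp add: power2_sum)
  finally show ?thesis using assms power_less_imp_less_base[of 1 2 "a + b"] by simp
qed

lemma symmetric_two_point_not_infinitely_divisible:
  assumes \<mu>: "real_distribution \<mu>" and s: "s > 0"
    and lower: "measure \<mu> {m - s} = 1/2" and upper: "measure \<mu> {m + s} = 1/2"
  shows "\<not> infinitely_divisible \<mu>"
proof
  assume "infinitely_divisible \<mu>"
  then obtain \<nu> where \<nu>: "real_distribution \<nu>" and \<mu>_eq: "\<mu> = iid_sum_distr 2 \<nu>"
    unfolding infinitely_divisible_def by (metis one_le_numeral)
  interpret \<mu>: real_distribution \<mu> using \<mu> by (simp add: real_distribution_iff_locale)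
  interpret \<nu>: real_distribution \<nu> using \<nu> by (simp add: real_distribution_iff_locale)
  define c where "c = (m + s) / 2"
  define d where "d = (m - s) / 2"
  have two_c: "2 * c = m + s" and two_d: "2 * d = m - s" by (simp_all add: c_def d_def)
  (* \<nu> * \<nu> lives on {m - s, m + s}, hence \<nu> lives on [d, c]; then the atoms of \<nu> * \<nu> at
     m + s and m - s are at most the squared atoms of \<nu> at c and d, so both of these exceed 1/sqrt 2. *)
  have "measure \<mu> ({m - s} \<union> {m + s}) = 1"
    using s lower upper by (subst \<mu>.finite_measure_Union) auto
  then have AE_two: "AE x in iid_sum_distr 2 \<nu>. x \<in> {m - s} \<union> {m + s}"
    unfolding \<mu>_eq by (rule \<mu>.AE_prob_1[unfolded \<mu>_eq])
  have "AE x in iid_sum_distr 2 \<nu>. 2 * d \<le> x"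
    using AE_two by eventually_elim (use s in \<open>auto simp: d_def\<close>)
  then have "AE y in \<nu>. d \<le> y"
    using AE_ge_if_AE_iid_sum_distr_ge[OF \<nu>, of 2 d] by simp
  have "AE x in iid_sum_distr 2 \<nu>. x \<le> 2 * c"
    using AE_two by eventually_elim (use s in \<open>auto simp: c_def\<close>)
  then have "AE y in \<nu>. y \<le> c"
    using AE_le_if_AE_iid_sum_distr_le[OF \<nu>, of 2 c] by simp
  have "1/2 \<le> measure \<nu> {d} ^ 2"
    using measure_iid_sum_distr_bottom_atom[OF \<nu> \<open>AE y in \<nu>. d \<le> y\<close>, of 2] lower
    unfolding \<mu>_eq by (simp add: two_d)
  moreover have "1/2 \<le> measure \<nu> {c} ^ 2"
    using measure_iid_sum_distr_top_atom[OF \<nu> \<open>AE y in \<nu>. y \<le> c\<close>, of 2] upper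
    unfolding \<mu>_eq by (simp add: two_c)
  ultimately have "1 < measure \<nu> {d} + measure \<nu> {c}"
    by (intro sum_gt_1_if_squares_ge_half measure_nonneg)
  moreover have "measure \<nu> ({d} \<union> {c}) = measure \<nu> {d} + measure \<nu> {c}"
    using s by (intro \<nu>.finite_measure_Union) (auto simp: c_def d_def)
  ultimately show False
    using \<nu>.prob_le_1[of "{d} \<union> {c}"] by linarith
qed


section \<open>Tightness and weak limits\<close>

lemma tight_if_second_moment_bounded:
  assumes \<mu>: "\<And>n. real_distribution (\<mu> n)"
    and int: "\<And>n. integrable (\<mu> n) (\<lambda>x. x\<^sup>2)"
    and bound: "\<And>n. (\<integral>x. x\<^sup>2 \<partial>\<mu> n) \<le> C"
  shows "tight \<mu>"
  unfolding tight_def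
proof (intro conjI allI impI)
  show "Distribution_Functions.real_distribution (\<mu> n)" for n
    using \<mu> by (simp add: real_distribution_iff_locale)
  fix \<epsilon> :: real assume \<epsilon>: "\<epsilon> > 0"
  define c where "c = sqrt (\<bar>C\<bar> / \<epsilon>) + 1"
  have c: "c > 0" unfolding c_def using \<epsilon> by (intro add_nonneg_pos) simp_all
  have "(sqrt (\<bar>C\<bar> / \<epsilon>))\<^sup>2 < c\<^sup>2"
    unfolding c_def using \<epsilon> by (intro power_strict_mono) auto
  then have "\<bar>C\<bar> / \<epsilon> < c\<^sup>2"
    using \<epsilon> by simp
  then have small: "C / c\<^sup>2 < \<epsilon>"
    using \<epsilon> c by (simp add: field_simps)
  show "\<exists>a b. a < b \<and> (\<forall>n. 1 - \<epsilon> < measure (\<mu> n) {a<..b})"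
  proof (intro exI conjI allI)
    show "- c < c" using c by simp
    fix n
    interpret real_distribution "\<mu> n" using \<mu> by (simp add: real_distribution_iff_locale)
    have "measure (\<mu> n) {x. c\<^sup>2 \<le> x\<^sup>2} \<le> (\<integral>x. x\<^sup>2 \<partial>\<mu> n) / c\<^sup>2"
      using integral_Markov_inequality_measure[OF int[of n], of UNIV "c\<^sup>2"] c by simp
    also have "\<dots> \<le> C / c\<^sup>2" using bound by (simp add: divide_right_mono)
    finally have "measure (\<mu> n) {x. c\<^sup>2 \<le> x\<^sup>2} < \<epsilon>" using small by linarith
    moreover have "{x. x\<^sup>2 < c\<^sup>2} \<subseteq> {-c<..c}"
      using c power2_less_imp_less[of _ c] power2_less_imp_less[of "- _" c] by fastforce
    then have "1 - measure (\<mu> n) {x. c\<^sup>2 \<le> x\<^sup>2} \<le> measure (\<mu> n) {-c<..c}"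
      using prob_compl[of "{x. c\<^sup>2 \<le> x\<^sup>2}"] finite_measure_mono[of "{x. x\<^sup>2 < c\<^sup>2}" "{-c<..c}"]
      by (simp add: set_diff_eq not_le)
    ultimately show "1 - \<epsilon> < measure (\<mu> n) {-c<..c}" by linarith
  qed
qed

lemma tight_iid_factor:
  assumes "tight \<mu>" and k: "k \<ge> 1"
    and \<nu>: "\<And>n. real_distribution (\<nu> n)" and \<mu>: "\<And>n. \<mu> n = iid_sum_distr k (\<nu> n)"
  shows "tight \<nu>"
  unfolding tight_def
proof (intro conjI allI impI)
  show "Distribution_Functions.real_distribution (\<nu> n)" for n
    using \<nu> by (simp add: real_distribution_iff_locale)
  fix \<epsilon> :: real assume \<epsilon>: "\<epsilon> > 0"
  obtain a b where "a < b" and ab: "\<And>n. 1 - (\<epsilon> / 2) ^ k < measure (\<mu> n) {a<..b}"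
    using \<open>tight \<mu>\<close> \<epsilon> unfolding tight_def by (meson half_gt_zero zero_less_power)
  have kpos: "real k > 0" using k by simp
  show "\<exists>a b. a < b \<and> (\<forall>n. 1 - \<epsilon> < measure (\<nu> n) {a<..b})"
  proof (intro exI conjI allI)
    show "a / k < b / k" using \<open>a < b\<close> kpos by (simp add: divide_strict_right_mono)
    fix n
    interpret \<mu>: real_distribution "\<mu> n" using \<mu> \<nu> real_distribution_iid_sum_distr
      by (simp add: real_distribution_iff_locale)
    interpret \<nu>: real_distribution "\<nu> n" using \<nu> by (simp add: real_distribution_iff_locale)
    have \<mu>_ab: "measure (\<mu> n) {a<..b} = cdf (\<mu> n) b - cdf (\<mu> n) a"
      using \<open>a < b\<close> by (simp add: \<mu>.cdf_diff_eq)
    have "measure (\<nu> n) {b / k<..} ^ k \<le> measure (\<mu> n) {b<..}"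
      using power_measure_greaterThan_le_iid_sum_distr[OF \<nu> k, of n "b / k"] kpos by (simp add: \<mu>)
    also have "\<dots> < (\<epsilon> / 2) ^ k"
      using ab[of n] \<mu>_ab \<mu>.cdf_nonneg[of a] \<mu> \<nu> real_distribution_iid_sum_distr
      by (simp add: measure_greaterThan_eq_1_minus_cdf)
    finally have upper: "measure (\<nu> n) {b / k<..} < \<epsilon> / 2"
      by (rule power_less_imp_less_base) (use \<epsilon> in simp)
    have "cdf (\<nu> n) (a / k) ^ k \<le> cdf (\<mu> n) a"
      using power_cdf_le_cdf_iid_sum_distr[OF \<nu>, of n "a / k" k] kpos by (simp add: \<mu>)
    also have "\<dots> < (\<epsilon> / 2) ^ k"
      using ab[of n] \<mu>_ab \<mu>.cdf_bounded_prob[of b] by linarith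
    finally have lower: "cdf (\<nu> n) (a / k) < \<epsilon> / 2"
      by (rule power_less_imp_less_base) (use \<epsilon> in simp)
    have "measure (\<nu> n) {a / k<..b / k} = cdf (\<nu> n) (b / k) - cdf (\<nu> n) (a / k)"
      using \<open>a < b\<close> kpos by (simp add: \<nu>.cdf_diff_eq divide_strict_right_mono)
    then show "1 - \<epsilon> < measure (\<nu> n) {a / k<..b / k}"
      using upper lower \<nu> by (simp add: measure_greaterThan_eq_1_minus_cdf)
  qed
qed

lemma infinitely_divisible_weak_limit:
  assumes \<mu>: "\<And>n. real_distribution (\<mu> n)" "\<And>n. infinitely_divisible (\<mu> n)" "tight \<mu>"
    and M: "real_distribution M" "weak_conv_m \<mu> M"
  shows "infinitely_divisible M"
  unfolding infinitely_divisible_def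
proof (intro allI impI)
  fix k :: nat assume k: "k \<ge> 1"
  have "\<forall>n. \<exists>\<nu>. real_distribution \<nu> \<and> \<mu> n = iid_sum_distr k \<nu>"
    using \<mu>(2) k unfolding infinitely_divisible_def by blast
  then obtain \<nu> where \<nu>: "\<And>n. real_distribution (\<nu> n)" "\<And>n. \<mu> n = iid_sum_distr k (\<nu> n)"
    by metis
  obtain r N where r: "strict_mono r" and N: "real_distribution N"
    and conv_N: "weak_conv_m (\<nu> \<circ> r) N"
    using tight_imp_convergent_subsubsequence[OF tight_iid_factor[OF \<mu>(3) k \<nu>], of id]
    by (metis strict_mono_id comp_id real_distribution_iff_locale)
  have conv_M: "weak_conv_m (\<mu> \<circ> r) M"
    using M(2) r by (auto simp: weak_conv_m_def weak_conv_def intro: LIMSEQ_subseq_LIMSEQ[unfolded comp_def])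
  have "char M t = char (iid_sum_distr k N) t" for t
  proof -
    have "(\<lambda>j. char (\<nu> (r j)) t ^ k) \<longlonglongrightarrow> char N t ^ k"
      using levy_continuity1[OF _ _ conv_N] \<nu>(1) N
      by (intro tendsto_power) (simp add: real_distribution_iff_locale comp_def)
    moreover have "(\<lambda>j. char (\<mu> (r j)) t) \<longlonglongrightarrow> char M t"
      using levy_continuity1[OF _ _ conv_M] \<mu>(1) M(1)
      by (simp add: real_distribution_iff_locale comp_def)
    ultimately show ?thesis
      by (simp add: \<nu> char_iid_sum_distr N LIMSEQ_unique)
  qed
  then have "M = iid_sum_distr k N"
    by (intro Levy_uniqueness ext)
      (use M(1) N in \<open>simp_all add: real_distribution_iid_sum_distr flip: real_distribution_iff_locale\<close>)
  then show "\<exists>\<nu>. real_distribution \<nu> \<and> M = iid_sum_distr k \<nu>"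
    using N by blast
qed

lemma integral_weak_conv_bounded_continuous:
  fixes f :: "real \<Rightarrow> real"
  assumes "\<And>n. real_distribution (\<mu> n)" "real_distribution M" "weak_conv_m \<mu> M"
    and "\<And>x. isCont f x" "\<And>x. \<bar>f x\<bar> \<le> B"
  shows "(\<lambda>n. \<integral>x. f x \<partial>\<mu> n) \<longlonglongrightarrow> (\<integral>x. f x \<partial>M)"
  using assms by (intro weak_conv_imp_integral_bdd_continuous_conv) (simp_all add: real_distribution_iff_locale)

lemma integral_weak_limit_le:
  fixes h :: "nat \<Rightarrow> real \<Rightarrow> real"
  assumes \<mu>: "\<And>n. real_distribution (\<mu> n)" and M: "real_distribution M" "weak_conv_m \<mu> M"
    and h_cont: "\<And>j x. isCont (h j) x" and h_bdd: "\<And>j x. \<bar>h j x\<bar> \<le> B j"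
    and h_mono: "\<And>x. incseq (\<lambda>j. h j x)" and h_lim: "\<And>x. (\<lambda>j. h j x) \<longlonglongrightarrow> g x"
    and g_int: "\<And>n. integrable (\<mu> n) g" and g_lim: "(\<lambda>n. \<integral>x. g x \<partial>\<mu> n) \<longlonglongrightarrow> L"
  shows "integrable M g \<and> (\<integral>x. g x \<partial>M) \<le> L"
proof -
  have h_meas: "h j \<in> borel_measurable borel" for j
    using h_cont by (intro borel_measurable_continuous_onI continuous_at_imp_continuous_on) auto
  have h_int: "integrable \<nu> (h j)" if "real_distribution \<nu>" for \<nu> j
  proof -
    interpret real_distribution \<nu> using that by (simp add: real_distribution_iff_locale)
    show ?thesis using h_bdd h_meas by (intro integrable_const_bound[where B="B j"]) auto
  qed
  have h_le: "h j x \<le> g x" for j x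
    using h_mono h_lim by (rule incseq_le)
  have h_M_le: "(\<integral>x. h j x \<partial>M) \<le> L" for j
  proof (rule LIMSEQ_le[OF _ g_lim])
    show "(\<lambda>n. \<integral>x. h j x \<partial>\<mu> n) \<longlonglongrightarrow> (\<integral>x. h j x \<partial>M)"
      by (rule integral_weak_conv_bounded_continuous[OF \<mu> M h_cont h_bdd])
    show "\<exists>N. \<forall>n\<ge>N. (\<integral>x. h j x \<partial>\<mu> n) \<le> (\<integral>x. g x \<partial>\<mu> n)"
      by (intro exI allI impI integral_mono h_int \<mu> g_int h_le)
  qed
  have "incseq (\<lambda>j. \<integral>x. h j x \<partial>M)"
    using h_int[OF M(1)] h_mono by (auto intro!: integral_mono simp: incseq_def)
  then have lim_M: "(\<lambda>j. \<integral>x. h j x \<partial>M) \<longlonglongrightarrow> (SUP j. \<integral>x. h j x \<partial>M)"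
    using h_M_le by (intro LIMSEQ_incseq_SUP bdd_aboveI[where M=L]) auto
  have g_meas: "g \<in> borel_measurable M"
  proof (rule borel_measurable_LIMSEQ_real[where u=h])
    show "(\<lambda>j. h j x) \<longlonglongrightarrow> g x" for x by (rule h_lim)
    interpret real_distribution M using M(1) by (simp add: real_distribution_iff_locale)
    show "h j \<in> borel_measurable M" for j using h_meas by simp
  qed
  have h_mono': "AE x in M. mono (\<lambda>j. h j x)"
    using h_mono by (simp add: incseq_def mono_def)
  have "integrable M g" and "(\<integral>x. g x \<partial>M) = (SUP j. \<integral>x. h j x \<partial>M)"
    using integrable_monotone_convergence[OF h_int[OF M(1)] h_mono' _ lim_M g_meas]
      integral_monotone_convergence[OF h_int[OF M(1)] h_mono' _ lim_M g_meas] h_lim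
    by simp_all
  moreover have "(SUP j. \<integral>x. h j x \<partial>M) \<le> L"
    using h_M_le by (rule cSUP_least[OF UNIV_not_empty])
  ultimately show ?thesis by simp
qed

lemma second_moment_weak_limit_le:
  assumes \<mu>: "\<And>n. real_distribution (\<mu> n)" and M: "real_distribution M" "weak_conv_m \<mu> M"
    and int: "\<And>n. integrable (\<mu> n) (\<lambda>x. x\<^sup>2)"
    and lim: "(\<lambda>n. \<integral>x. x\<^sup>2 \<partial>\<mu> n) \<longlonglongrightarrow> L"
  shows "integrable M (\<lambda>x. x\<^sup>2) \<and> (\<integral>x. x\<^sup>2 \<partial>M) \<le> L"
proof (rule integral_weak_limit_le[OF \<mu> M _ _ _ _ int lim])
  show "isCont (\<lambda>x. min (x\<^sup>2) (real j)) x" for j x by (intro continuous_intros)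
  show "\<bar>min (x\<^sup>2) (real j)\<bar> \<le> real j" for j x by auto
  show "incseq (\<lambda>j. min (x\<^sup>2) (real j))" for x by (auto simp: incseq_def)
  show "(\<lambda>j. min (x\<^sup>2) (real j)) \<longlonglongrightarrow> x\<^sup>2" for x
  proof (rule tendsto_eventually)
    show "\<forall>\<^sub>F j in sequentially. min (x\<^sup>2) (real j) = x\<^sup>2"
      unfolding eventually_sequentially
    proof (intro exI allI impI)
      fix j assume "nat \<lceil>x\<^sup>2\<rceil> \<le> j"
      then have "x\<^sup>2 \<le> real j" by linarith
      then show "min (x\<^sup>2) (real j) = x\<^sup>2" by simp
    qed
  qed
qed

lemma tendsto_min_mult_infdist_indicator:
  fixes x :: "'a :: metric_space"
  assumes "open U" "U \<noteq> UNIV"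
  shows "(\<lambda>j. min 1 (real j * infdist x (- U))) \<longlonglongrightarrow> indicator U x"
proof (cases "x \<in> U")
  case True
  then have d: "infdist x (- U) > 0"
    using assms by (intro infdist_pos_not_in_closed) auto
  then obtain N :: nat where "1 / infdist x (- U) < N" using reals_Archimedean2 by blast
  have "min 1 (real j * infdist x (- U)) = 1" if "N \<le> j" for j
  proof -
    have "1 < real N * infdist x (- U)" using \<open>1 / infdist x (- U) < N\<close> d by (simp add: field_simps)
    also have "\<dots> \<le> real j * infdist x (- U)" using that d by (simp add: mult_right_mono)
    finally show ?thesis by simp
  qed
  then have "\<forall>\<^sub>F j in sequentially. min 1 (real j * infdist x (- U)) = indicator U x"
    using True unfolding eventually_sequentially by auto
  then show ?thesis by (rule tendsto_eventually)
qed simp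

lemma measure_open_weak_limit_le:
  assumes \<mu>: "\<And>n. real_distribution (\<mu> n)" and M: "real_distribution M" "weak_conv_m \<mu> M"
    and "open U" and lim: "(\<lambda>n. measure (\<mu> n) U) \<longlonglongrightarrow> L"
  shows "measure M U \<le> L"
proof -
  have indicator_U:
    "integrable \<nu> (indicator U :: real \<Rightarrow> real) \<and> (\<integral>x. indicator U x \<partial>\<nu>) = measure \<nu> U"
    if "real_distribution \<nu>" for \<nu>
  proof -
    interpret real_distribution \<nu> using that by (simp add: real_distribution_iff_locale)
    show ?thesis using \<open>open U\<close> by (auto intro!: integrable_real_indicator simp: less_top[symmetric])
  qed
  show ?thesis
  proof (cases "U = UNIV")
    case True
    have "measure \<nu> U = 1" if "real_distribution \<nu>" for \<nu>
    proof -
      interpret real_distribution \<nu> using that by (simp add: real_distribution_iff_locale)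
      show ?thesis using True prob_space by simp
    qed
    then show ?thesis using lim \<mu> M(1) by (simp add: LIMSEQ_const_iff)
  next
    case False
    have "integrable M (indicator U :: real \<Rightarrow> real) \<and> (\<integral>x. indicator U x \<partial>M) \<le> L"
    proof (rule integral_weak_limit_le[OF \<mu> M, where h="\<lambda>j x. min 1 (real j * infdist x (- U))"])
      show "isCont (\<lambda>x. min 1 (real j * infdist x (- U))) x" for j x
        by (intro continuous_intros)
      show "\<bar>min 1 (real j * infdist x (- U))\<bar> \<le> 1" for j x
        by (simp add: infdist_nonneg)
      show "incseq (\<lambda>j. min 1 (real j * infdist x (- U)))" for x
      proof (rule incseq_SucI)
        have "real j * infdist x (- U) \<le> real (Suc j) * infdist x (- U)" for j
          by (rule mult_right_mono) (simp_all add: infdist_nonneg)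
        then show "min 1 (real j * infdist x (- U)) \<le> min 1 (real (Suc j) * infdist x (- U))" for j
          by (rule min.mono[OF order.refl])
      qed
      show "(\<lambda>j. min 1 (real j * infdist x (- U))) \<longlonglongrightarrow> indicator U x" for x
        using \<open>open U\<close> False by (rule tendsto_min_mult_infdist_indicator)
      show "integrable (\<mu> n) (indicator U :: real \<Rightarrow> real)" for n
        using indicator_U[OF \<mu>] by (rule conjunct1)
      show "(\<lambda>n. \<integral>x. indicator U x \<partial>\<mu> n) \<longlonglongrightarrow> L"
        using lim indicator_U[OF \<mu>] by simp
    qed
    then show ?thesis using indicator_U[OF M(1)] by simp
  qed
qed

lemma abs_sub_clamp_le:
  fixes x K :: real
  assumes "K > 0"
  shows "\<bar>x - max (- K) (min K x)\<bar> \<le> x\<^sup>2 / K"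
proof (cases "\<bar>x\<bar> \<le> K")
  case True
  then have "max (- K) (min K x) = x" by (simp add: abs_le_iff)
  then show ?thesis using assms by simp
next
  case False
  then have "\<bar>x - max (- K) (min K x)\<bar> \<le> \<bar>x\<bar>" using assms by (simp add: abs_if max_def min_def)
  also have "K * \<bar>x\<bar> \<le> \<bar>x\<bar> * \<bar>x\<bar>" using False by (intro mult_right_mono) auto
  then have "\<bar>x\<bar> \<le> x\<^sup>2 / K" using assms by (simp add: field_simps power2_eq_square)
  finally show ?thesis .
qed

lemma integral_clamp_approx:
  assumes \<nu>: "real_distribution \<nu>" and int: "integrable \<nu> (\<lambda>x. x\<^sup>2)" and K: "K > 0"
  shows "\<bar>(\<integral>x. x \<partial>\<nu>) - (\<integral>x. max (- K) (min K x) \<partial>\<nu>)\<bar> \<le> (\<integral>x. x\<^sup>2 \<partial>\<nu>) / K"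
proof -
  interpret real_distribution \<nu> using \<nu> by (simp add: real_distribution_iff_locale)
  have int_id: "integrable \<nu> (\<lambda>x. x)"
    by (rule integrable_id_if_square_integrable[OF \<nu> int])
  have int_clamp: "integrable \<nu> (\<lambda>x. max (- K) (min K x))"
    using K by (intro integrable_const_bound[where B=K]) auto
  have "\<bar>(\<integral>x. x \<partial>\<nu>) - (\<integral>x. max (- K) (min K x) \<partial>\<nu>)\<bar> = \<bar>\<integral>x. x - max (- K) (min K x) \<partial>\<nu>\<bar>"
    using int_id int_clamp by simp
  also have "\<dots> \<le> (\<integral>x. \<bar>x - max (- K) (min K x)\<bar> \<partial>\<nu>)"
    by (rule integral_abs_bound)
  also have "\<dots> \<le> (\<integral>x. x\<^sup>2 / K \<partial>\<nu>)"
    using int_id int_clamp int abs_sub_clamp_le[OF K] by (intro integral_mono) auto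
  finally show ?thesis by simp
qed

lemma mean_weak_limit:
  assumes \<mu>: "\<And>n. real_distribution (\<mu> n)" and M: "real_distribution M" "weak_conv_m \<mu> M"
    and int: "\<And>n. integrable (\<mu> n) (\<lambda>x. x\<^sup>2)" "integrable M (\<lambda>x. x\<^sup>2)"
    and bound: "\<And>n. (\<integral>x. x\<^sup>2 \<partial>\<mu> n) \<le> C" "(\<integral>x. x\<^sup>2 \<partial>M) \<le> C"
    and lim: "(\<lambda>n. \<integral>x. x \<partial>\<mu> n) \<longlonglongrightarrow> a"
  shows "(\<integral>x. x \<partial>M) = a"
proof -
  have "0 \<le> (\<integral>x. x\<^sup>2 \<partial>M)" by (rule integral_nonneg_AE) simp
  then have C: "C \<ge> 0" using bound(2) by linarith
  have approx: "\<bar>(\<integral>x. x \<partial>M) - a\<bar> \<le> 2 * C / K" if K: "K > 0" for K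
  proof -
    let ?f = "\<lambda>x. max (- K) (min K x)"
    have "(\<lambda>n. \<bar>(\<integral>x. x \<partial>\<mu> n) - (\<integral>x. ?f x \<partial>\<mu> n)\<bar>) \<longlonglongrightarrow> \<bar>a - (\<integral>x. ?f x \<partial>M)\<bar>"
    proof (intro tendsto_rabs tendsto_diff lim)
      show "(\<lambda>n. \<integral>x. ?f x \<partial>\<mu> n) \<longlonglongrightarrow> (\<integral>x. ?f x \<partial>M)"
        using K by (intro integral_weak_conv_bounded_continuous[OF \<mu> M, where B=K] continuous_intros) auto
    qed
    moreover have "\<bar>(\<integral>x. x \<partial>\<mu> n) - (\<integral>x. ?f x \<partial>\<mu> n)\<bar> \<le> C / K" for n
      using K by (intro order_trans[OF integral_clamp_approx[OF \<mu> int(1) K] divide_right_mono[OF bound(1)]]) simp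
    ultimately have "\<bar>a - (\<integral>x. ?f x \<partial>M)\<bar> \<le> C / K"
      by (intro LIMSEQ_le_const2) auto
    moreover have "\<bar>(\<integral>x. x \<partial>M) - (\<integral>x. ?f x \<partial>M)\<bar> \<le> C / K"
      using K by (intro order_trans[OF integral_clamp_approx[OF M(1) int(2) K] divide_right_mono[OF bound(2)]]) simp
    ultimately show ?thesis by simp
  qed
  have "\<bar>(\<integral>x. x \<partial>M) - a\<bar> \<le> 0 + e" if e: "e > 0" for e
  proof -
    have "\<bar>(\<integral>x. x \<partial>M) - a\<bar> \<le> 2 * C / ((2 * C + 1) / e)"
      using approx[of "(2 * C + 1) / e"] C e by simp
    also have "\<dots> \<le> e" using C e by (simp add: field_simps)
    finally show ?thesis by simp
  qed
  then show ?thesis using field_le_epsilon[of "\<bar>(\<integral>x. x \<partial>M) - a\<bar>" 0] by simp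
qed


section \<open>Mass within one standard deviation\<close>

definition prob_within_sd :: "real measure \<Rightarrow> real" where
  "prob_within_sd \<mu> = measure \<mu> {x. \<bar>x - mean \<mu>\<bar> < sqrt (var \<mu>)}"

lemma prob_within_sd_lt_1:
  assumes \<mu>: "real_distribution \<mu>" and int: "integrable \<mu> (\<lambda>x. x\<^sup>2)" and var: "var \<mu> > 0"
  shows "prob_within_sd \<mu> < 1"
proof (rule ccontr)
  interpret real_distribution \<mu> using \<mu> by (simp add: real_distribution_iff_locale)
  assume "\<not> prob_within_sd \<mu> < 1"
  then have "prob {x. \<bar>x - mean \<mu>\<bar> < sqrt (var \<mu>)} = 1"
    using prob_le_1 unfolding prob_within_sd_def by (meson antisym not_less)
  then have "AE x in \<mu>. \<bar>x - mean \<mu>\<bar> < sqrt (var \<mu>)"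
    using AE_prob_1 by force
  then have "AE x in \<mu>. (x - mean \<mu>)\<^sup>2 < var \<mu>"
    by eventually_elim (simp flip: real_sqrt_abs)
  then have "(\<integral>x. (x - mean \<mu>)\<^sup>2 \<partial>\<mu>) < (\<integral>x. var \<mu> \<partial>\<mu>)"
    using integrable_square_shift[OF \<mu> int] emeasure_space_1 by (intro integral_less_AE_space) simp_all
  then show False using prob_space by (simp add: var_def)
qed

lemma AE_dist_mean_eq_sd_if_prob_within_sd_eq_0:
  assumes \<mu>: "real_distribution \<mu>" and int: "integrable \<mu> (\<lambda>x. x\<^sup>2)"
    and "prob_within_sd \<mu> = 0"
  shows "AE x in \<mu>. \<bar>x - mean \<mu>\<bar> = sqrt (var \<mu>)"
proof -
  interpret real_distribution \<mu> using \<mu> by (simp add: real_distribution_iff_locale)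
  have "AE x in \<mu>. x \<notin> {x. \<bar>x - mean \<mu>\<bar> < sqrt (var \<mu>)}"
    using assms(3) unfolding prob_within_sd_def
    by (intro AE_not_in) (simp add: null_sets_def emeasure_eq_measure)
  then have ge: "AE x in \<mu>. 0 \<le> (x - mean \<mu>)\<^sup>2 - var \<mu>"
    by eventually_elim (simp add: not_less flip: real_sqrt_abs)
  have "(\<integral>x. (x - mean \<mu>)\<^sup>2 - var \<mu> \<partial>\<mu>) = 0"
    using integrable_square_shift[OF \<mu> int] prob_space by (simp add: var_def)
  then have "AE x in \<mu>. (x - mean \<mu>)\<^sup>2 - var \<mu> = 0"
    using integral_nonneg_eq_0_iff_AE[of \<mu> "\<lambda>x. (x - mean \<mu>)\<^sup>2 - var \<mu>"] ge
      integrable_square_shift[OF \<mu> int] by simp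
  then show ?thesis
    by eventually_elim (simp flip: real_sqrt_abs)
qed

lemma symmetric_two_point_if_AE_dist_mean_eq:
  assumes \<mu>: "real_distribution \<mu>" and s: "s > 0"
    and AE_dist: "AE x in \<mu>. \<bar>x - mean \<mu>\<bar> = s"
  shows "measure \<mu> {mean \<mu> - s} = 1/2" "measure \<mu> {mean \<mu> + s} = 1/2"
proof -
  interpret real_distribution \<mu> using \<mu> by (simp add: real_distribution_iff_locale)
  define m where "m = mean \<mu>"
  define p where "p = measure \<mu> {m + s}"
  define q where "q = measure \<mu> {m - s}"
  have AE_two: "AE x in \<mu>. x \<in> {m - s} \<union> {m + s}"
    using AE_dist by eventually_elim (auto simp: m_def abs_eq_iff)
  have "p + q = 1"
    using AE_in_set_eq_1[of "{m - s} \<union> {m + s}"] AE_two s finite_measure_Union[of "{m - s}" "{m + s}"]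
    by (simp add: p_def q_def)
  moreover have "m = m + s * (p - q)"
  proof -
    have "m = (\<integral>x. x \<partial>\<mu>)" by (simp add: m_def mean_def)
    also have "\<dots> = (\<integral>x. m + s * (indicator {m + s} x - indicator {m - s} x) \<partial>\<mu>)"
      using AE_two s by (intro integral_cong_AE) auto
    also have "\<dots> = m + s * (p - q)"
      using prob_space integrable_real_indicator[of "{m + s}" \<mu>] integrable_real_indicator[of "{m - s}" \<mu>]
      by (simp add: p_def q_def less_top[symmetric])
    finally show ?thesis .
  qed
  ultimately have "p = 1/2" "q = 1/2" using s by simp_all
  then show "measure \<mu> {mean \<mu> - s} = 1/2" "measure \<mu> {mean \<mu> + s} = 1/2"
    by (simp_all add: p_def q_def m_def)
qed

lemma prob_within_sd_pos:
  assumes "\<mu> \<in> ID0_class"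
  shows "prob_within_sd \<mu> > 0"
proof (rule ccontr)
  have \<mu>: "real_distribution \<mu>" "infinitely_divisible \<mu>" "integrable \<mu> (\<lambda>x. x\<^sup>2)" "var \<mu> > 0"
    using assms by (simp_all add: ID0_class_def ID_class_def)
  assume "\<not> prob_within_sd \<mu> > 0"
  then have "prob_within_sd \<mu> = 0"
    using measure_nonneg[of \<mu>] unfolding prob_within_sd_def by (meson antisym not_less)
  then have "AE x in \<mu>. \<bar>x - mean \<mu>\<bar> = sqrt (var \<mu>)"
    by (rule AE_dist_mean_eq_sd_if_prob_within_sd_eq_0[OF \<mu>(1,3)])
  then have "measure \<mu> {mean \<mu> - sqrt (var \<mu>)} = 1/2" "measure \<mu> {mean \<mu> + sqrt (var \<mu>)} = 1/2"
    using symmetric_two_point_if_AE_dist_mean_eq[OF \<mu>(1)] \<mu>(4) by simp_all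
  then have "\<not> infinitely_divisible \<mu>"
    using \<mu>(4) by (intro symmetric_two_point_not_infinitely_divisible[OF \<mu>(1)]) simp_all
  then show False using \<mu>(2) by contradiction
qed

definition standardize :: "real measure \<Rightarrow> real measure" where
  "standardize \<mu> = distr \<mu> borel (\<lambda>x. (x - mean \<mu>) / sqrt (var \<mu>))"

lemma standardize_ID0_class:
  assumes "\<mu> \<in> ID0_class"
  shows "standardize \<mu> \<in> ID_class"
    "(\<integral>x. x\<^sup>2 \<partial>standardize \<mu>) = 1" "(\<integral>x. x \<partial>standardize \<mu>) = 0"
    "measure (standardize \<mu>) {x. \<bar>x\<bar> < 1} = prob_within_sd \<mu>"
proof -
  have \<mu>: "real_distribution \<mu>" "infinitely_divisible \<mu>" "integrable \<mu> (\<lambda>x. x\<^sup>2)" "var \<mu> > 0"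
    using assms by (simp_all add: ID0_class_def ID_class_def)
  interpret real_distribution \<mu> using \<mu>(1) by (simp add: real_distribution_iff_locale)
  define m where "m = mean \<mu>"
  define s where "s = sqrt (var \<mu>)"
  have s: "s > 0" "s\<^sup>2 = var \<mu>" using \<mu>(4) by (simp_all add: s_def)
  have affine: "(\<lambda>x. (x - m) / s) = (\<lambda>x. (1 / s) * x + (- m / s))"
    by (simp add: fun_eq_iff diff_divide_distrib)
  have std: "standardize \<mu> = distr \<mu> borel (\<lambda>x. (x - m) / s)"
    by (simp add: standardize_def m_def s_def)
  have int_shift: "integrable \<mu> (\<lambda>x. (x - m)\<^sup>2)"
    by (rule integrable_square_shift[OF \<mu>(1,3)])
  have "integrable (standardize \<mu>) (\<lambda>x. x\<^sup>2)"
    unfolding std using int_shift by (simp add: integrable_distr_eq power_divide)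
  moreover have "real_distribution (standardize \<mu>)"
    unfolding std by (rule real_distribution_distrI[OF \<mu>(1)]) measurable
  moreover have "infinitely_divisible (standardize \<mu>)"
    unfolding std affine using \<mu>(1,2) by (rule infinitely_divisible_distr_affine)
  ultimately show "standardize \<mu> \<in> ID_class" by (simp add: ID_class_def)
  show "(\<integral>x. x\<^sup>2 \<partial>standardize \<mu>) = 1"
    unfolding std using s \<mu>(4) by (simp add: integral_distr power_divide var_def m_def)
  have "(\<integral>x. x \<partial>standardize \<mu>) = (\<integral>x. (x - m) / s \<partial>\<mu>)"
    unfolding std by (rule integral_distr) simp_all
  also have "\<dots> = ((\<integral>x. x \<partial>\<mu>) - m) / s"
    using integrable_id_if_square_integrable[OF \<mu>(1,3)] prob_space by simp
  finally show "(\<integral>x. x \<partial>standardize \<mu>) = 0"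
    by (simp add: mean_def m_def)
  have "measure (standardize \<mu>) {x. \<bar>x\<bar> < 1} = measure \<mu> ((\<lambda>x. (x - m) / s) -` {x. \<bar>x\<bar> < 1})"
    unfolding std by (subst measure_distr) simp_all
  also have "(\<lambda>x. (x - m) / s) -` {x. \<bar>x\<bar> < 1} = {x. \<bar>x - m\<bar> < s}"
    using s by (simp add: abs_divide)
  finally show "measure (standardize \<mu>) {x. \<bar>x\<bar> < 1} = prob_within_sd \<mu>"
    by (simp add: prob_within_sd_def m_def s_def)
qed


section \<open>The extremal problem\<close>

lemma INF_as_limit_real:
  fixes f :: "'a \<Rightarrow> real"
  assumes "S \<noteq> {}" "bdd_below (f ` S)"
  obtains x where "\<And>n. x n \<in> S" "(\<lambda>n. f (x n)) \<longlonglongrightarrow> (INF s\<in>S. f s)"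
proof -
  have "\<exists>s\<in>S. f s < (INF s\<in>S. f s) + 1 / Suc n" for n
    using assms by (subst cINF_less_iff[symmetric]) auto
  then obtain x where x: "\<And>n. x n \<in> S" "\<And>n. f (x n) < (INF s\<in>S. f s) + 1 / Suc n"
    by metis
  have "(\<lambda>n. f (x n)) \<longlonglongrightarrow> (INF s\<in>S. f s)"
  proof (rule tendsto_sandwich[OF _ _ tendsto_const])
    show "\<forall>\<^sub>F n in sequentially. (INF s\<in>S. f s) \<le> f (x n)"
      using x(1) assms(2) by (simp add: cINF_lower)
    show "\<forall>\<^sub>F n in sequentially. f (x n) \<le> (INF s\<in>S. f s) + 1 / Suc n"
      using x(2) by (simp add: less_imp_le)
    show "(\<lambda>n. (INF s\<in>S. f s) + 1 / Suc n) \<longlonglongrightarrow> (INF s\<in>S. f s)"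
      using tendsto_add[OF tendsto_const LIMSEQ_Suc[OF lim_1_over_n]] by simp
  qed
  then show ?thesis using x(1) that by blast
qed

lemma std_normal_in_ID0_class: "std_normal_distribution \<in> ID0_class"
proof -
  have "mean std_normal_distribution = 0"
    using integral_std_normal_distribution_moment_odd[of 1] by (simp add: mean_def)
  then have "var std_normal_distribution = 1"
    using std_normal_distribution_even_moments(1)[of 1] by (simp add: var_def)
  then show ?thesis
    using real_distribution_std_normal infinitely_divisible_std_normal
      integrable_std_normal_distribution_moment[of 2]
    by (simp add: ID0_class_def ID_class_def)
qed

lemma P_I0_eq_INF_prob_within_sd: "P_I0 = (INF \<mu>\<in>ID0_class. prob_within_sd \<mu>)"
  by (simp add: P_I0_def prob_within_sd_def)

lemma bdd_below_prob_within_sd: "bdd_below (prob_within_sd ` A)"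
  by (auto intro!: bdd_belowI[of _ 0] simp: prob_within_sd_def)

lemma P_I0_le_prob_within_sd: "\<mu> \<in> ID0_class \<Longrightarrow> P_I0 \<le> prob_within_sd \<mu>"
  unfolding P_I0_eq_INF_prob_within_sd by (rule cINF_lower[OF bdd_below_prob_within_sd])

lemma P_I0_lt_1: "P_I0 < 1"
  using P_I0_le_prob_within_sd[OF std_normal_in_ID0_class]
    prob_within_sd_lt_1[of std_normal_distribution] std_normal_in_ID0_class
  by (fastforce simp: ID0_class_def ID_class_def)

lemma standardized_ID_subseq_limit:
  fixes \<nu> :: "nat \<Rightarrow> real measure"
  assumes \<nu>: "\<And>n. \<nu> n \<in> ID_class"
    "\<And>n. (\<integral>x. x\<^sup>2 \<partial>\<nu> n) = 1" "\<And>n. (\<integral>x. x \<partial>\<nu> n) = 0"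
  obtains r Y where "strict_mono r" "Y \<in> ID_class" "weak_conv_m (\<nu> \<circ> r) Y"
    "(\<integral>x. x\<^sup>2 \<partial>Y) \<le> 1" "(\<integral>x. x \<partial>Y) = 0"
proof -
  have rd: "\<And>n. real_distribution (\<nu> n)" and int: "\<And>n. integrable (\<nu> n) (\<lambda>x. x\<^sup>2)"
    and ID: "\<And>n. infinitely_divisible (\<nu> n)"
    using \<nu>(1) by (simp_all add: ID_class_def)
  have tight: "tight (\<nu> \<circ> r)" for r :: "nat \<Rightarrow> nat"
    using rd int \<nu>(2) by (intro tight_if_second_moment_bounded[where C=1]) simp_all
  obtain r Y where r: "strict_mono r" and Y: "real_distribution Y" and conv: "weak_conv_m (\<nu> \<circ> r) Y"
    using tight_imp_convergent_subsubsequence[OF tight[of id]]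
    by (metis strict_mono_id comp_id real_distribution_iff_locale)
  have "infinitely_divisible Y"
    by (rule infinitely_divisible_weak_limit[OF _ _ tight Y conv]) (simp_all add: rd ID)
  moreover have int_Y: "integrable Y (\<lambda>x. x\<^sup>2)" and second: "(\<integral>x. x\<^sup>2 \<partial>Y) \<le> 1"
    using second_moment_weak_limit_le[of "\<nu> \<circ> r" Y 1] rd int \<nu>(2) Y conv by simp_all
  moreover have "(\<integral>x. x \<partial>Y) = 0"
    using rd Y conv int int_Y \<nu>(2) second \<nu>(3)
    by (intro mean_weak_limit[of "\<nu> \<circ> r" Y 1]) simp_all
  ultimately show ?thesis
    using that r Y conv by (simp add: ID_class_def)
qed

lemma P_I0_attained: "\<exists>Y\<in>ID0_class. prob_within_sd Y = P_I0"
proof -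
  obtain \<mu> where \<mu>: "\<And>n. \<mu> n \<in> ID0_class" and lim: "(\<lambda>n. prob_within_sd (\<mu> n)) \<longlonglongrightarrow> P_I0"
    using INF_as_limit_real[OF _ bdd_below_prob_within_sd] std_normal_in_ID0_class
    unfolding P_I0_eq_INF_prob_within_sd by blast
  define \<nu> where "\<nu> n = standardize (\<mu> n)" for n
  obtain r Y where r: "strict_mono r" and Y: "Y \<in> ID_class" and conv: "weak_conv_m (\<nu> \<circ> r) Y"
    and second: "(\<integral>x. x\<^sup>2 \<partial>Y) \<le> 1" and mean: "(\<integral>x. x \<partial>Y) = 0"
    using standardized_ID_subseq_limit[of \<nu>] standardize_ID0_class[OF \<mu>] unfolding \<nu>_def by blast
  have rd_Y: "real_distribution Y" "integrable Y (\<lambda>x. x\<^sup>2)" using Y by (simp_all add: ID_class_def)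
  have var_Y: "var Y = (\<integral>x. x\<^sup>2 \<partial>Y)" and mean_Y: "mean Y = 0"
    using mean by (simp_all add: var_def mean_def)
  have "(\<lambda>n. measure ((\<nu> \<circ> r) n) {x. \<bar>x\<bar> < 1}) \<longlonglongrightarrow> P_I0"
    using LIMSEQ_subseq_LIMSEQ[OF lim r] standardize_ID0_class(4)[OF \<mu>] by (simp add: \<nu>_def comp_def)
  then have unit_le: "measure Y {x. \<bar>x\<bar> < 1} \<le> P_I0"
    using standardize_ID0_class(1)[OF \<mu>] rd_Y conv
    by (intro measure_open_weak_limit_le[of "\<nu> \<circ> r"] open_Collect_less continuous_intros)
      (simp_all add: \<nu>_def ID_class_def)
  have "var Y > 0"
  proof (rule ccontr)
    assume "\<not> var Y > 0"
    then have "var Y = 0" using var_nonneg[of Y] by linarith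
    then have "measure Y {x. \<bar>x\<bar> < 1} = 1"
      by (intro measure_eq_1_if_var_eq_0[OF rd_Y]) (simp_all add: mean_Y)
    then show False using unit_le P_I0_lt_1 by simp
  qed
  then have Y_ID0: "Y \<in> ID0_class" using Y by (simp add: ID0_class_def)
  have sd_le_1: "sqrt (var Y) \<le> 1" using var_Y second by simp
  have "prob_within_sd Y \<le> measure Y {x. \<bar>x\<bar> < 1}"
    unfolding prob_within_sd_def mean_Y using rd_Y(1)
    by (intro finite_measure.finite_measure_mono)
      (auto simp: Defs.real_distribution_def prob_space_def intro: less_le_trans[OF _ sd_le_1])
  then show ?thesis
    using unit_le P_I0_le_prob_within_sd[OF Y_ID0] Y_ID0 by (intro bexI[of _ Y]) simp_all
qed

lemma P_I0_le_P_I: "P_I0 \<le> P_I"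
  unfolding P_I_def
proof (rule cINF_greatest)
  show "ID_class \<noteq> {}" using std_normal_in_ID0_class by (auto simp: ID0_class_def)
  fix \<mu> assume \<mu>: "\<mu> \<in> ID_class"
  then have rd: "real_distribution \<mu>" "integrable \<mu> (\<lambda>x. x\<^sup>2)" by (simp_all add: ID_class_def)
  show "P_I0 \<le> measure \<mu> {x. \<bar>x - mean \<mu>\<bar> \<le> sqrt (var \<mu>)}"
  proof (cases "var \<mu> > 0")
    case True
    then have "P_I0 \<le> prob_within_sd \<mu>"
      using \<mu> by (intro P_I0_le_prob_within_sd) (simp add: ID0_class_def)
    also have "\<dots> \<le> measure \<mu> {x. \<bar>x - mean \<mu>\<bar> \<le> sqrt (var \<mu>)}"
      unfolding prob_within_sd_def using rd(1)
      by (intro finite_measure.finite_measure_mono) (auto simp: Defs.real_distribution_def prob_space_def)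
    finally show ?thesis .
  next
    case False
    then have "var \<mu> = 0" using var_nonneg[of \<mu>] by linarith
    then have "measure \<mu> {x. \<bar>x - mean \<mu>\<bar> \<le> sqrt (var \<mu>)} = 1"
      by (intro measure_eq_1_if_var_eq_0[OF rd]) simp_all
    then show ?thesis using P_I0_lt_1 by simp
  qed
qed

theorem theorem2p1:
  shows "P_I \<ge> P_I0 \<and> P_I0 > 0 \<and>
    (\<exists>\<mu>\<in>ID0_class. P_I0 = measure \<mu> {x. \<bar>x - mean \<mu>\<bar> < sqrt (var \<mu>)})"
proof -
  obtain Y where Y: "Y \<in> ID0_class" "prob_within_sd Y = P_I0"
    using P_I0_attained by blast
  then have "P_I0 > 0" using prob_within_sd_pos by fastforce
  moreover have "P_I0 = measure Y {x. \<bar>x - mean Y\<bar> < sqrt (var Y)}"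
    using Y(2) by (simp add: prob_within_sd_def)
  ultimately show ?thesis
    using P_I0_le_P_I Y(1) by blast
qed

end
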